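(* For all positive integers $m,n$, the complete bipartite graph $K_{m,n}$ is not $(m+2)$-solvable.
   Context: An undirected graph is identified with the directed graph having both arcs $(u,v)$ and $(v,u)$ for each edge. $N^-(v)$ denotes the set of (in-)neighbours of $v$. For $q\ge2$ let $[q]=\{0,\dots,q-1\}$. A $D$-function over $[q]$ is a map $f=(f_v)_{v\in V}:[q]^V\to[q]^V$ with each $f_v(x)$ depending only on $(x_u)_{u\in N^-(v)}$. $D$ is $q$-solvable if some $D$-function $f$ over $[q]$ has the property that for every $x\in[q]^V$ there is $v$ with $f_v(x)=x_v$. *)

theory Defs
  imports "HOL-Library.FuncSet"
begin

text \<open>A digraph is given by a vertex set V and an arc set E (pairs (u,v) = arc u to v).
  An undirected graph is the digraph with both arcs for each edge.\<close>

definition in_nbrs :: "'v set \<Rightarrow> ('v \<times> 'v) set \<Rightarrow> 'v \<Rightarrow> 'v set" where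
  "in_nbrs V E v = {u \<in> V. (u, v) \<in> E}"

definition configs :: "'v set \<Rightarrow> nat \<Rightarrow> ('v \<Rightarrow> nat) set" where
  "configs V q = (V \<rightarrow>\<^sub>E {0..<q})"

definition is_D_function :: "'v set \<Rightarrow> ('v \<times> 'v) set \<Rightarrow> nat \<Rightarrow> (('v \<Rightarrow> nat) \<Rightarrow> ('v \<Rightarrow> nat)) \<Rightarrow> bool" where
  "is_D_function V E q f \<longleftrightarrow>
     (\<forall>x \<in> configs V q. f x \<in> configs V q) \<and>
     (\<forall>v \<in> V. \<forall>x \<in> configs V q. \<forall>y \<in> configs V q.
        (\<forall>u \<in> in_nbrs V E v. x u = y u) \<longrightarrow> f x v = f y v)"

definition q_solvable :: "'v set \<Rightarrow> ('v \<times> 'v) set \<Rightarrow> nat \<Rightarrow> bool" where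
  "q_solvable V E q \<longleftrightarrow>
     (\<exists>f. is_D_function V E q f \<and> (\<forall>x \<in> configs V q. \<exists>v \<in> V. f x v = x v))"

definition Kbip_V :: "nat \<Rightarrow> nat \<Rightarrow> (nat + nat) set" where
  "Kbip_V m n = Inl ` {..<m} \<union> Inr ` {..<n}"

definition Kbip_E :: "nat \<Rightarrow> nat \<Rightarrow> ((nat + nat) \<times> (nat + nat)) set" where
  "Kbip_E m n = {(Inl i, Inr j) | i j. i < m \<and> j < n} \<union> {(Inr j, Inl i) | i j. i < m \<and> j < n}"

end

theory Submission
  imports Defs
begin

text \<open>Let L, R be the two parts, with |L| + 2 \<le> q. For each right vertex v, pick a colour c v
  that differs from the value f assigns at v to each of the |L| + 1 configurations that are
  constant k on L (k \<le> |L|) and 0 on R. The left coordinates of f are then fixed once R is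
  coloured by c, so some k \<le> |L| differs from all of them. In the configuration that is k on
  L and c on R, f changes every coordinate, because each coordinate only sees the other part.\<close>

lemma ex_less_notin_if_card_less:
  fixes S :: "nat set"
  assumes "finite S" "card S < q"
  shows "\<exists>c<q. c \<notin> S"
proof (rule ccontr)
  assume "\<not> ?thesis"
  then have "{0..<q} \<subseteq> S" by auto
  then have "card {0..<q} \<le> card S" using assms(1) by (rule card_mono[rotated])
  then show False using assms(2) by simp
qed

lemma D_function_eq_if_eq_on_nbrs:
  assumes "is_D_function V E q f" "v \<in> V" "x \<in> configs V q" "y \<in> configs V q"
    and "in_nbrs V E v \<subseteq> U" "\<forall>u\<in>U. x u = y u"
  shows "f x v = f y v"
  using assms unfolding is_D_function_def by blast

definition const_on_config :: "'v set \<Rightarrow> 'v set \<Rightarrow> nat \<Rightarrow> ('v \<Rightarrow> nat) \<Rightarrow> 'v \<Rightarrow> nat" where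
  "const_on_config V L k c = restrict (\<lambda>v. if v \<in> L then k else c v) V"

lemma const_on_config_in_configs:
  assumes "k < q" "\<forall>v\<in>V - L. c v < q"
  shows "const_on_config V L k c \<in> configs V q"
  using assms unfolding const_on_config_def configs_def by auto

lemma const_on_config_in: "v \<in> V \<Longrightarrow> v \<in> L \<Longrightarrow> const_on_config V L k c v = k"
  and const_on_config_notin: "v \<in> V \<Longrightarrow> v \<notin> L \<Longrightarrow> const_on_config V L k c v = c v"
  unfolding const_on_config_def by auto

lemma bipartite_not_q_solvable:
  assumes V: "V = L \<union> R" "L \<inter> R = {}" and "finite L" and q: "card L + 2 \<le> q"
    and nbrs_L: "\<And>v. v \<in> L \<Longrightarrow> in_nbrs V E v \<subseteq> R"
    and nbrs_R: "\<And>v. v \<in> R \<Longrightarrow> in_nbrs V E v \<subseteq> L"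
  shows "\<not> q_solvable V E q"
proof
  assume "q_solvable V E q"
  then obtain f where f: "is_D_function V E q f"
    and fixpoint: "\<forall>x \<in> configs V q. \<exists>v\<in>V. f x v = x v"
    unfolding q_solvable_def by blast
  let ?x = "const_on_config V L"
  have on_L: "?x k c v = k" if "v \<in> L" for k c v
    using that V by (simp add: const_on_config_in)
  have on_R: "?x k c v = c v" if "v \<in> R" for k c v
    using that V by (intro const_on_config_notin) auto
  define forbidden where "forbidden v = (\<lambda>k. f (?x k (\<lambda>_. 0)) v) ` {0..card L}" for v
  have "card (forbidden v) < q" for v
    unfolding forbidden_def using card_image_le[of "{0..card L}" "\<lambda>k. f (?x k (\<lambda>_. 0)) v"] q
    by simp
  then have "\<forall>v. \<exists>c<q. c \<notin> forbidden v"
    by (simp add: ex_less_notin_if_card_less forbidden_def)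
  then obtain c where c: "\<And>v. c v < q" "\<And>v. c v \<notin> forbidden v" by metis
  have "card (f (?x 0 c) ` L) < card L + 1"
    using card_image_le[OF \<open>finite L\<close>] by (simp add: less_Suc_eq_le)
  then obtain k where k: "k < card L + 1" "k \<notin> f (?x 0 c) ` L"
    using ex_less_notin_if_card_less \<open>finite L\<close> by blast
  have x: "?x k c \<in> configs V q" and x0: "?x 0 c \<in> configs V q"
    and t: "?x k (\<lambda>_. 0) \<in> configs V q"
    using k(1) q c(1) by (simp_all add: const_on_config_in_configs)
  obtain v where "v \<in> V" and v: "f (?x k c) v = ?x k c v"
    using fixpoint x by blast
  then consider "v \<in> L" | "v \<in> R" using V by blast
  then show False
  proof cases
    case 1
    have "f (?x k c) v = f (?x 0 c) v"
      using D_function_eq_if_eq_on_nbrs[OF f \<open>v \<in> V\<close> x x0 nbrs_L[OF 1]] on_R by simp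
    then show False using v k(2) on_L[OF 1] 1 by auto
  next
    case 2
    have "f (?x k c) v = f (?x k (\<lambda>_. 0)) v"
      using D_function_eq_if_eq_on_nbrs[OF f \<open>v \<in> V\<close> x t nbrs_R[OF 2]] on_L by simp
    moreover have "f (?x k (\<lambda>_. 0)) v \<in> forbidden v"
      using k(1) unfolding forbidden_def by auto
    ultimately show False using v c(2)[of v] on_R[OF 2] by auto
  qed
qed

theorem corollary11:
  fixes m n :: nat
  assumes "m \<ge> 1" and "n \<ge> 1"
  shows "\<not> q_solvable (Kbip_V m n) (Kbip_E m n) (m + 2)"
proof (rule bipartite_not_q_solvable)
  show "Kbip_V m n = Inl ` {..<m} \<union> Inr ` {..<n}" unfolding Kbip_V_def ..
  show "card (Inl ` {..<m} :: (nat + nat) set) + 2 \<le> m + 2"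
    by (simp add: card_image)
  show "in_nbrs (Kbip_V m n) (Kbip_E m n) v \<subseteq> Inr ` {..<n}" if "v \<in> Inl ` {..<m}" for v
    using that unfolding in_nbrs_def Kbip_E_def by auto
  show "in_nbrs (Kbip_V m n) (Kbip_E m n) v \<subseteq> Inl ` {..<m}" if "v \<in> Inr ` {..<n}" for v
    using that unfolding in_nbrs_def Kbip_E_def by auto
qed auto

end
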